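(* Let $d\geq 1000$, let $\Omega\subseteq\mathbb{R}^d$ be bounded and measurable, let $\lambda=\left(\frac{\sqrt d}{8\log d}\right)^d$ and $\Delta=2^d\lambda=\left(\frac{\sqrt d}{4\log d}\right)^d$, and let $\mathbf X$ be a Poisson point process of intensity $\lambda$ on $\Omega$. Then \[ \mathbb{E}\left|\left\{x\in\mathbf X: |\mathbf X\cap B_x(2r_d)|\geq\Delta\big(1+\Delta^{-1/3}\big)\right\}\right|\leq(2d)^{-1}\,\mathbb{E}|\mathbf X|. \]
   Context: $r_d$ is the radius of the Euclidean ball of volume $1$ in $\mathbb{R}^d$; $B_x(r)$ is the closed Euclidean ball of radius $r$ centred at $x$. $\log$ is the natural logarithm. *)

theory Defs
  imports "HOL-Analysis.Analysis" "HOL-Probability.Probability"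
begin

definition unit_vol_radius :: "'a::euclidean_space itself \<Rightarrow> real" where
  "unit_vol_radius _ = (THE r. r > 0 \<and> measure lborel (cball (0::'a) r) = 1)"

definition npts :: "'a set \<Rightarrow> 'a set \<Rightarrow> nat" where
  "npts S A = card (S \<inter> A)"

definition poisson_pp :: "'w measure \<Rightarrow> ('w \<Rightarrow> 'a::euclidean_space set) \<Rightarrow> real \<Rightarrow> 'a set \<Rightarrow> bool" where
  "poisson_pp M X lam Omega \<longleftrightarrow>
     prob_space M \<and>
     (\<forall>\<omega>\<in>space M. X \<omega> \<subseteq> Omega) \<and>
     (AE \<omega> in M. finite (X \<omega>)) \<and>
     (\<forall>A \<in> sets borel. (\<lambda>\<omega>. npts (X \<omega>) A) \<in> measurable M (count_space UNIV)) \<and>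
     (\<forall>A \<in> sets borel. \<forall>k::nat.
        measure M {\<omega>\<in>space M. npts (X \<omega>) A = k} =
          (lam * measure lebesgue (A \<inter> Omega)) ^ k / fact k * exp (- (lam * measure lebesgue (A \<inter> Omega)))) \<and>
     (\<forall>(F::nat \<Rightarrow> 'a set) n. (\<forall>i<n. F i \<in> sets borel) \<and> disjoint_family_on F {..<n} \<longrightarrow>
        prob_space.indep_vars M (\<lambda>_. count_space UNIV) (\<lambda>i \<omega>. npts (X \<omega>) (F i)) {..<n})"

end

theory Submission
  imports Defs
begin

(* Count heavy points cell by cell.  Cover Omega by finitely many disjoint cells Q_j, each
   inside a ball B_j of radius slightly larger than 2 r_d, so that a point of Q_j can only be
   heavy if N(B_j) >= t, where t = D^3 + D^2 and D = Delta^(1/3).  The heavy points are then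
   at most sum_j N(Q_j) [N(B_j) >= t].  As N(Q_j) and N(B_j - Q_j) are independent Poisson
   variables, an exponential-moment bound gives
     E N(Q_j) [N(B_j) >= t] <= theta^(1 - t) exp (lam vol(B_j) (theta - 1)) E N(Q_j),
   and the radius of B_j is chosen so that lam vol(B_j) = D^3 + D.  With theta = 1 + 1/(2D)
   the factor is at most exp (3/4 + 1/(2D) - D/4) <= 1/(2d), because D >= 8d once d >= 1000;
   summing over j and using sum_j E N(Q_j) = E |X| gives the bound. *)

section \<open>Poisson-distributed counts\<close>

definition poisson_count :: "'w measure \<Rightarrow> ('w \<Rightarrow> nat) \<Rightarrow> real \<Rightarrow> bool" where
  "poisson_count M N a \<longleftrightarrow> N \<in> measurable M (count_space UNIV) \<and>
     (\<forall>k. measure M {\<omega>\<in>space M. N \<omega> = k} = a ^ k / fact k * exp (- a))"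

lemma poisson_count_nonneg:
  assumes "poisson_count M N a"
  shows "0 \<le> a"
proof -
  have "0 \<le> a * exp (- a)"
    using assms measure_nonneg[of M "{\<omega>\<in>space M. N \<omega> = 1}"] by (simp add: poisson_count_def)
  then show ?thesis by (simp add: zero_le_mult_iff)
qed

lemma nn_integral_poisson_count:
  assumes "prob_space M" and N: "poisson_count M N a"
  shows "(\<integral>\<^sup>+\<omega>. f (N \<omega>) \<partial>M) = (\<Sum>k. f k * ennreal (a ^ k / fact k * exp (- a)))"
proof -
  interpret prob_space M by fact
  have "N \<in> measurable M (count_space UNIV)"
    using N by (simp add: poisson_count_def)
  then have events: "{\<omega>\<in>space M. N \<omega> = k} \<in> sets M" for k
    by measurable
  have "(\<integral>\<^sup>+\<omega>. f (N \<omega>) \<partial>M) = (\<integral>\<^sup>+\<omega>. (\<Sum>k. f k * indicator {\<omega>\<in>space M. N \<omega> = k} \<omega>) \<partial>M)"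
  proof (rule nn_integral_cong)
    fix \<omega> assume "\<omega> \<in> space M"
    then have "(\<lambda>k. f k * indicator {\<omega>\<in>space M. N \<omega> = k} \<omega>) = (\<lambda>k. if k = N \<omega> then f k else 0)"
      by (auto simp: indicator_def)
    then show "f (N \<omega>) = (\<Sum>k. f k * indicator {\<omega>\<in>space M. N \<omega> = k} \<omega>)"
      using sums_unique[OF sums_single[of "N \<omega>" f]] by simp
  qed
  also have "\<dots> = (\<Sum>k. f k * emeasure M {\<omega>\<in>space M. N \<omega> = k})"
    using events by (simp add: nn_integral_suminf nn_integral_cmult_indicator)
  also have "\<dots> = (\<Sum>k. f k * ennreal (a ^ k / fact k * exp (- a)))"
    using N by (simp add: emeasure_eq_measure poisson_count_def)
  finally show ?thesis .
qed

lemma poisson_generating_sums: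
  fixes a x :: real
  shows "(\<lambda>k. x ^ k * (a ^ k / fact k * exp (- a))) sums exp (a * (x - 1))"
proof -
  have "(\<lambda>k. (a * x) ^ k / fact k * exp (- a)) sums (exp (a * x) * exp (- a))"
    using exp_converges[of "a * x"] by (intro sums_mult2) (simp add: divide_inverse mult.commute)
  then show ?thesis
    by (simp add: power_mult_distrib mult_exp_exp algebra_simps)
qed

lemma poisson_weighted_generating_sums:
  fixes a x :: real
  shows "(\<lambda>k. real k * x ^ k * (a ^ k / fact k * exp (- a))) sums (a * x * exp (a * (x - 1)))"
proof -
  have shifted: "real (Suc k) * x ^ Suc k * (a ^ Suc k / fact (Suc k) * exp (- a))
      = a * x * (x ^ k * (a ^ k / fact k * exp (- a)))" for k
    by (simp add: field_simps del: of_nat_Suc)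
  have "(\<lambda>k. a * x * (x ^ k * (a ^ k / fact k * exp (- a)))) sums (a * x * exp (a * (x - 1)))"
    by (intro sums_mult poisson_generating_sums)
  then have "(\<lambda>k. real (Suc k) * x ^ Suc k * (a ^ Suc k / fact (Suc k) * exp (- a)))
      sums (a * x * exp (a * (x - 1)))"
    by (simp only: shifted)
  then show ?thesis
    by (subst (asm) sums_Suc_iff) simp
qed

lemma nn_integral_poisson_power:
  assumes "prob_space M" "poisson_count M N a" "0 \<le> x"
  shows "(\<integral>\<^sup>+\<omega>. ennreal (x ^ N \<omega>) \<partial>M) = ennreal (exp (a * (x - 1)))"
proof -
  have "0 \<le> a" using assms(2) by (rule poisson_count_nonneg)
  have "(\<integral>\<^sup>+\<omega>. ennreal (x ^ N \<omega>) \<partial>M) = (\<Sum>k. ennreal (x ^ k) * ennreal (a ^ k / fact k * exp (- a)))"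
    by (rule nn_integral_poisson_count[OF assms(1,2)])
  also have "\<dots> = (\<Sum>k. ennreal (x ^ k * (a ^ k / fact k * exp (- a))))"
    using assms \<open>0 \<le> a\<close> by (intro suminf_cong ennreal_mult[symmetric]) auto
  also have "\<dots> = ennreal (exp (a * (x - 1)))"
    using assms \<open>0 \<le> a\<close> by (intro suminf_ennreal_eq poisson_generating_sums) simp
  finally show ?thesis .
qed

lemma nn_integral_poisson_mult_power:
  assumes "prob_space M" "poisson_count M N a" "0 \<le> x"
  shows "(\<integral>\<^sup>+\<omega>. ennreal (real (N \<omega>) * x ^ N \<omega>) \<partial>M) = ennreal (a * x * exp (a * (x - 1)))"
proof -
  have "0 \<le> a" using assms(2) by (rule poisson_count_nonneg)
  have "(\<integral>\<^sup>+\<omega>. ennreal (real (N \<omega>) * x ^ N \<omega>) \<partial>M)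
      = (\<Sum>k. ennreal (real k * x ^ k) * ennreal (a ^ k / fact k * exp (- a)))"
    by (rule nn_integral_poisson_count[OF assms(1,2)])
  also have "\<dots> = (\<Sum>k. ennreal (real k * x ^ k * (a ^ k / fact k * exp (- a))))"
    using assms \<open>0 \<le> a\<close> by (intro suminf_cong ennreal_mult[symmetric]) auto
  also have "\<dots> = ennreal (a * x * exp (a * (x - 1)))"
    using assms \<open>0 \<le> a\<close> by (intro suminf_ennreal_eq poisson_weighted_generating_sums) simp
  finally show ?thesis .
qed

lemma nn_integral_poisson_mean:
  assumes "prob_space M" "poisson_count M N a"
  shows "(\<integral>\<^sup>+\<omega>. ennreal (real (N \<omega>)) \<partial>M) = ennreal a"
  using nn_integral_poisson_mult_power[OF assms, of 1] by simp

lemma (in prob_space) indep_var_nn_integral: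
  fixes X Y :: "'a \<Rightarrow> ennreal"
  assumes "indep_var borel X borel Y"
  shows "(\<integral>\<^sup>+\<omega>. X \<omega> * Y \<omega> \<partial>M) = (\<integral>\<^sup>+\<omega>. X \<omega> \<partial>M) * (\<integral>\<^sup>+\<omega>. Y \<omega> \<partial>M)"
proof -
  have "case_bool borel borel = (\<lambda>_::bool. borel :: ennreal measure)"
    by (simp add: fun_eq_iff split: bool.split)
  then have "indep_vars (\<lambda>_. borel) (case_bool X Y) UNIV"
    using assms unfolding indep_var_def by simp
  then have "(\<integral>\<^sup>+\<omega>. (\<Prod>b\<in>UNIV. case_bool X Y b \<omega>) \<partial>M) = (\<Prod>b\<in>UNIV. \<integral>\<^sup>+\<omega>. case_bool X Y b \<omega> \<partial>M)"
    by (intro indep_vars_nn_integral) auto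
  then show ?thesis
    by (simp add: UNIV_bool mult.commute)
qed

lemma (in prob_space) indep_vars_imp_indep_var:
  assumes "indep_vars M' X I" "i \<in> I" "j \<in> I" "i \<noteq> j"
  shows "indep_var (M' i) (X i) (M' j) (X j)"
proof -
  have "indep_var (M' i) ((\<lambda>f. f i) \<circ> (\<lambda>\<omega>. restrict (\<lambda>i. X i \<omega>) {i}))
      (M' j) ((\<lambda>f. f j) \<circ> (\<lambda>\<omega>. restrict (\<lambda>i. X i \<omega>) {j}))"
    using assms by (intro indep_var_compose[OF indep_var_restrict[OF assms(1)]]) auto
  then show ?thesis
    by (simp add: comp_def)
qed

lemma poisson_pair_weighted_tail_le:
  fixes N N' :: "'w \<Rightarrow> nat" and \<theta> t :: real
  assumes M: "prob_space M"
    and N: "poisson_count M N a" and N': "poisson_count M N' b"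
    and indep: "prob_space.indep_var M (count_space UNIV) N (count_space UNIV) N'"
    and \<theta>: "1 \<le> \<theta>"
  shows "(\<integral>\<^sup>+\<omega>. ennreal (if t \<le> real (N \<omega> + N' \<omega>) then real (N \<omega>) else 0) \<partial>M)
    \<le> ennreal (a * \<theta> powr (1 - t) * exp ((a + b) * (\<theta> - 1)))"
proof -
  interpret prob_space M by fact
  have a: "0 \<le> a" and b: "0 \<le> b"
    using N N' by (auto intro: poisson_count_nonneg)
  \<comment> \<open>Markov's inequality for the exponential moment: \<open>1 \<le> \<theta> powr (k + m - t)\<close> on the event.\<close>
  have markov: "ennreal (if t \<le> real (k + m) then real k else 0)
      \<le> ennreal (\<theta> powr (- t)) * (ennreal (real k * \<theta> ^ k) * ennreal (\<theta> ^ m))" for k m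
  proof (cases "t \<le> real (k + m)")
    case True
    have "\<theta> powr t \<le> \<theta> ^ k * \<theta> ^ m"
      using True \<theta> powr_mono[of t "real (k + m)" \<theta>] by (simp add: powr_add powr_realpow)
    then have "1 \<le> \<theta> powr (- t) * (\<theta> ^ k * \<theta> ^ m)"
      using \<theta> by (simp add: powr_minus field_simps)
    then have "real k \<le> \<theta> powr (- t) * (real k * \<theta> ^ k * \<theta> ^ m)"
      using mult_left_mono[of 1 "\<theta> powr (- t) * (\<theta> ^ k * \<theta> ^ m)" "real k"] by (simp add: mult_ac)
    then show ?thesis
      using True \<theta> by (simp add: ennreal_mult[symmetric] ennreal_leI)
  qed simp
  have "indep_var borel (\<lambda>\<omega>. ennreal (real (N \<omega>) * \<theta> ^ N \<omega>)) borel (\<lambda>\<omega>. ennreal (\<theta> ^ N' \<omega>))"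
    using indep_var_compose[OF indep, of "\<lambda>k. ennreal (real k * \<theta> ^ k)" borel "\<lambda>k. ennreal (\<theta> ^ k)" borel]
    by (simp add: comp_def)
  then have product: "(\<integral>\<^sup>+\<omega>. ennreal (real (N \<omega>) * \<theta> ^ N \<omega>) * ennreal (\<theta> ^ N' \<omega>) \<partial>M)
      = ennreal (a * \<theta> * exp (a * (\<theta> - 1))) * ennreal (exp (b * (\<theta> - 1)))"
    using \<theta> by (simp add: indep_var_nn_integral nn_integral_poisson_mult_power[OF M N]
        nn_integral_poisson_power[OF M N'])
  have "(\<integral>\<^sup>+\<omega>. ennreal (if t \<le> real (N \<omega> + N' \<omega>) then real (N \<omega>) else 0) \<partial>M)
      \<le> (\<integral>\<^sup>+\<omega>. ennreal (\<theta> powr (- t)) * (ennreal (real (N \<omega>) * \<theta> ^ N \<omega>) * ennreal (\<theta> ^ N' \<omega>)) \<partial>M)"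
    by (intro nn_integral_mono markov)
  also have "\<dots> = ennreal (\<theta> powr (- t)) * (ennreal (a * \<theta> * exp (a * (\<theta> - 1))) * ennreal (exp (b * (\<theta> - 1))))"
    using N N' by (subst nn_integral_cmult) (auto simp: poisson_count_def product)
  also have "\<dots> = ennreal (a * \<theta> powr (1 - t) * exp ((a + b) * (\<theta> - 1)))"
  proof -
    have "\<theta> powr (- t) * (a * \<theta> * exp (a * (\<theta> - 1)) * exp (b * (\<theta> - 1)))
        = a * (\<theta> powr (- t) * \<theta>) * exp ((a + b) * (\<theta> - 1))"
      by (simp add: mult_exp_exp algebra_simps)
    also have "\<theta> powr (- t) * \<theta> = \<theta> powr (1 - t)"
      using \<theta> powr_add[of \<theta> "- t" 1] by simp
    finally show ?thesis
      using \<theta> a b by (simp add: ennreal_mult[symmetric])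
  qed
  finally show ?thesis .
qed

section \<open>Point counts in cells and balls\<close>

lemma npts_mono: "finite S \<Longrightarrow> A \<subseteq> B \<Longrightarrow> npts S A \<le> npts S B"
  unfolding npts_def by (intro card_mono) auto

lemma npts_Un_disjoint:
  "finite S \<Longrightarrow> A \<inter> B = {} \<Longrightarrow> npts S (A \<union> B) = npts S A + npts S B"
  unfolding npts_def by (subst card_Un_disjoint[symmetric]) (auto simp: Int_Un_distrib)

lemma card_eq_sum_npts:
  assumes "finite S" "finite I" "disjoint_family_on Q I" "S \<subseteq> (\<Union>j\<in>I. Q j)"
  shows "card S = (\<Sum>j\<in>I. npts S (Q j))"
proof -
  have "S = (\<Union>j\<in>I. S \<inter> Q j)"
    using assms(4) by blast
  also have "card \<dots> = (\<Sum>j\<in>I. card (S \<inter> Q j))"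
    using assms by (intro card_UN_disjoint) (auto simp: disjoint_family_on_def)
  finally show ?thesis
    by (simp add: npts_def)
qed

lemma card_heavy_le_sum_npts:
  fixes t :: real
  assumes S: "finite S" and I: "finite I" and cover: "S \<subseteq> (\<Union>j\<in>I. Q j)"
    and local: "\<And>j x. j \<in> I \<Longrightarrow> x \<in> Q j \<Longrightarrow> K x \<subseteq> B j"
  shows "card {x\<in>S. t \<le> real (npts S (K x))}
    \<le> (\<Sum>j\<in>I. if t \<le> real (npts S (B j)) then npts S (Q j) else 0)"
proof -
  let ?H = "{x\<in>S. t \<le> real (npts S (K x))}"
  have "card ?H \<le> card (\<Union>j\<in>I. ?H \<inter> Q j)"
    using S cover by (intro card_mono) auto
  also have "\<dots> \<le> (\<Sum>j\<in>I. card (?H \<inter> Q j))"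
    by (rule card_UN_le[OF I])
  also have "\<dots> \<le> (\<Sum>j\<in>I. if t \<le> real (npts S (B j)) then npts S (Q j) else 0)"
  proof (rule sum_mono)
    fix j assume j: "j \<in> I"
    show "card (?H \<inter> Q j) \<le> (if t \<le> real (npts S (B j)) then npts S (Q j) else 0)"
    proof (cases "?H \<inter> Q j = {}")
      case False
      then obtain x where x: "x \<in> ?H" "x \<in> Q j" by blast
      then have "t \<le> real (npts S (B j))"
        using npts_mono[OF S local[OF j x(2)]] by simp
      moreover have "card (?H \<inter> Q j) \<le> npts S (Q j)"
        using S by (auto simp: npts_def intro: card_mono)
      ultimately show ?thesis by simp
    qed simp
  qed
  finally show ?thesis .
qed

lemma bounded_imp_small_cells:
  fixes S :: "'a::euclidean_space set"
  assumes "bounded S" "0 < \<delta>"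
  obtains n :: nat and c Q where "disjoint_family Q" "\<And>j. Q j \<in> sets borel"
    "\<And>j. Q j \<subseteq> ball (c j) \<delta>" "S \<subseteq> (\<Union>j<n. Q j)"
proof -
  have "seq_compact (closure S)"
    using assms(1) by (intro compact_imp_seq_compact) simp
  then obtain K where K: "finite K" "closure S \<subseteq> (\<Union>x\<in>K. ball x \<delta>)"
    using seq_compact_imp_totally_bounded[of "closure S"] assms(2) by meson
  obtain n :: nat and c where n: "K = c ` {i. i < n}"
    using finite_imp_nat_seg_image_inj_on[OF K(1)] by blast
  have "S \<subseteq> closure S"
    by (rule closure_subset)
  also have "\<dots> \<subseteq> (\<Union>x\<in>K. ball x \<delta>)"
    by (rule K(2))
  also have "\<dots> = (\<Union>j\<in>{0..<n}. ball (c j) \<delta>)"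
    unfolding n by (simp add: atLeast0LessThan lessThan_def)
  also have "\<dots> = (\<Union>j<n. disjointed (\<lambda>j. ball (c j) \<delta>) j)"
    by (simp flip: atLeast0LessThan add: finite_UN_disjointed_eq)
  finally have "S \<subseteq> (\<Union>j<n. disjointed (\<lambda>j. ball (c j) \<delta>) j)" .
  moreover have "disjointed (\<lambda>j. ball (c j) \<delta>) j \<in> sets borel" for j
    unfolding disjointed_def by (intro sets.Diff sets.finite_UN borel_open open_ball) auto
  ultimately show ?thesis
    using disjointed_subset[of "\<lambda>j. ball (c j) \<delta>"]
    by (intro that[of "disjointed (\<lambda>j. ball (c j) \<delta>)" c n] disjoint_family_disjointed) auto
qed

lemma
  shows unit_vol_radius_pos: "0 < unit_vol_radius TYPE('a::euclidean_space)"
    and unit_ball_vol_unit_vol_radius: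
      "unit_ball_vol (real DIM('a)) * unit_vol_radius TYPE('a) ^ DIM('a) = 1"
proof -
  define U where "U = unit_ball_vol (real DIM('a))"
  define r0 where "r0 = (1 / U) powr (1 / real DIM('a))"
  have U: "0 < U"
    by (simp add: U_def)
  have r0: "0 < r0" "U * r0 ^ DIM('a) = 1"
    using U by (simp_all add: r0_def powr_realpow[symmetric] powr_powr)
  have volume: "measure lborel (cball (0::'a) r) = U * r ^ DIM('a)" if "0 \<le> r" for r
    using that by (simp add: U_def content_cball)
  have "unit_vol_radius TYPE('a) = r0"
    unfolding unit_vol_radius_def
  proof (rule the_equality)
    fix r assume r: "0 < r \<and> measure lborel (cball (0::'a) r) = 1"
    then have "U * r ^ DIM('a) = U * r0 ^ DIM('a)"
      using r0 volume[of r] by simp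
    then have "r ^ DIM('a) = r0 ^ DIM('a)"
      using U by simp
    then show "r = r0"
      using r r0 by (auto intro: power_eq_imp_eq_base)
  qed (use r0 volume in auto)
  then show "0 < unit_vol_radius TYPE('a)" "U * unit_vol_radius TYPE('a) ^ DIM('a) = 1"
    using r0 by simp_all
qed

lemma measure_cball_unit_vol_radius:
  fixes c :: "'a::euclidean_space"
  assumes "0 \<le> s"
  shows "measure lborel (cball c (s * unit_vol_radius TYPE('a))) = s ^ DIM('a)"
proof -
  have "measure lborel (cball c (s * unit_vol_radius TYPE('a)))
      = s ^ DIM('a) * (unit_ball_vol (real DIM('a)) * unit_vol_radius TYPE('a) ^ DIM('a))"
    using assms unit_vol_radius_pos[where 'a='a] by (simp add: content_cball power_mult_distrib)
  then show ?thesis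
    by (simp add: unit_ball_vol_unit_vol_radius)
qed

section \<open>Poisson point processes\<close>

lemma
  assumes "poisson_pp M X lam Omega"
  shows poisson_pp_prob_space: "prob_space M"
    and poisson_pp_subset: "\<omega> \<in> space M \<Longrightarrow> X \<omega> \<subseteq> Omega"
    and poisson_pp_AE_finite: "AE \<omega> in M. finite (X \<omega>)"
    and poisson_pp_measurable_npts:
      "A \<in> sets borel \<Longrightarrow> (\<lambda>\<omega>. npts (X \<omega>) A) \<in> measurable M (count_space UNIV)"
  using assms unfolding poisson_pp_def by blast+

lemma poisson_pp_poisson_count:
  assumes "poisson_pp M X lam Omega" "A \<in> sets borel"
  shows "poisson_count M (\<lambda>\<omega>. npts (X \<omega>) A) (lam * measure lebesgue (A \<inter> Omega))"
  using assms unfolding poisson_pp_def poisson_count_def by blast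

lemma poisson_pp_indep_var:
  assumes pp: "poisson_pp M X lam Omega"
    and "A \<in> sets borel" "B \<in> sets borel" "A \<inter> B = {}"
  shows "prob_space.indep_var M (count_space UNIV) (\<lambda>\<omega>. npts (X \<omega>) A) (count_space UNIV) (\<lambda>\<omega>. npts (X \<omega>) B)"
proof -
  interpret prob_space M
    using pp by (rule poisson_pp_prob_space)
  define F where "F i = (if i = (0::nat) then A else B)" for i
  have "(\<forall>i<2. F i \<in> sets borel) \<and> disjoint_family_on F {..<2}"
    using assms by (auto simp: F_def disjoint_family_on_def)
  then have "indep_vars (\<lambda>_. count_space UNIV) (\<lambda>i \<omega>. npts (X \<omega>) (F i)) {..<2}"
    using pp unfolding poisson_pp_def by blast
  from indep_vars_imp_indep_var[OF this, of 0 1] show ?thesis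
    by (simp add: F_def)
qed

lemma poisson_pp_local_tail_le:
  fixes t \<theta> :: real
  assumes pp: "poisson_pp M X lam Omega" and Omega: "bounded Omega" "Omega \<in> sets lebesgue"
    and A: "A \<in> sets borel" and B: "B \<in> sets borel" and "A \<subseteq> B" and \<theta>: "1 \<le> \<theta>"
  shows "(\<integral>\<^sup>+\<omega>. ennreal (if t \<le> real (npts (X \<omega>) B) then real (npts (X \<omega>) A) else 0) \<partial>M)
    \<le> ennreal (\<theta> powr (1 - t) * exp (lam * measure lebesgue (B \<inter> Omega) * (\<theta> - 1)))
       * (\<integral>\<^sup>+\<omega>. ennreal (real (npts (X \<omega>) A)) \<partial>M)"
proof -
  let ?\<mu> = "\<lambda>C. lam * measure lebesgue (C \<inter> Omega)"
  have M: "prob_space M"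
    using pp by (rule poisson_pp_prob_space)
  have BA: "B - A \<in> sets borel"
    using A B by simp
  have "AE \<omega> in M. npts (X \<omega>) B = npts (X \<omega>) A + npts (X \<omega>) (B - A)"
    using poisson_pp_AE_finite[OF pp]
  proof eventually_elim
    case (elim \<omega>)
    then show ?case
      using \<open>A \<subseteq> B\<close> npts_Un_disjoint[OF elim, of A "B - A"] by (simp add: Un_absorb1)
  qed
  then have "(\<integral>\<^sup>+\<omega>. ennreal (if t \<le> real (npts (X \<omega>) B) then real (npts (X \<omega>) A) else 0) \<partial>M)
      = (\<integral>\<^sup>+\<omega>. ennreal (if t \<le> real (npts (X \<omega>) A + npts (X \<omega>) (B - A)) then real (npts (X \<omega>) A) else 0) \<partial>M)"
    by (intro nn_integral_cong_AE) auto
  also have "\<dots> \<le> ennreal (?\<mu> A * \<theta> powr (1 - t) * exp ((?\<mu> A + ?\<mu> (B - A)) * (\<theta> - 1)))"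
    using A BA by (intro poisson_pair_weighted_tail_le M \<theta> poisson_pp_poisson_count[OF pp]
        poisson_pp_indep_var[OF pp]) auto
  also have "?\<mu> A + ?\<mu> (B - A) = ?\<mu> B"
  proof -
    have lmeas: "C \<inter> Omega \<in> lmeasurable" if "C \<in> sets borel" for C
      using that Omega by (intro fmeasurableI2[OF bounded_set_imp_lmeasurable, of Omega]) auto
    have "measure lebesgue ((A \<inter> Omega) \<union> (B \<inter> Omega))
        = measure lebesgue (A \<inter> Omega) + measure lebesgue (B \<inter> Omega - A \<inter> Omega)"
      using lmeas[OF A] lmeas[OF B] by (rule measure_Un2)
    moreover have "(A \<inter> Omega) \<union> (B \<inter> Omega) = B \<inter> Omega" "B \<inter> Omega - A \<inter> Omega = (B - A) \<inter> Omega"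
      using \<open>A \<subseteq> B\<close> by auto
    ultimately show ?thesis
      by (simp add: distrib_left[symmetric])
  qed
  also have "ennreal (?\<mu> A * \<theta> powr (1 - t) * exp (?\<mu> B * (\<theta> - 1)))
      = ennreal (\<theta> powr (1 - t) * exp (?\<mu> B * (\<theta> - 1))) * (\<integral>\<^sup>+\<omega>. ennreal (real (npts (X \<omega>) A)) \<partial>M)"
    using poisson_count_nonneg[OF poisson_pp_poisson_count[OF pp A]]
    by (simp add: nn_integral_poisson_mean[OF M poisson_pp_poisson_count[OF pp A]]
        ennreal_mult[symmetric] mult_ac)
  finally show ?thesis .
qed

lemma poisson_pp_ball_tail_le:
  fixes t \<theta> :: real and c :: "'a::euclidean_space"
  assumes pp: "poisson_pp M X lam Omega" and Omega: "bounded Omega" "Omega \<in> sets lebesgue"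
    and lam: "0 \<le> lam" and A: "A \<in> sets borel" "A \<subseteq> cball c \<rho>" and \<theta>: "1 \<le> \<theta>"
  shows "(\<integral>\<^sup>+\<omega>. ennreal (if t \<le> real (npts (X \<omega>) (cball c \<rho>)) then real (npts (X \<omega>) A) else 0) \<partial>M)
    \<le> ennreal (\<theta> powr (1 - t) * exp (lam * measure lborel (cball (0::'a) \<rho>) * (\<theta> - 1)))
       * (\<integral>\<^sup>+\<omega>. ennreal (real (npts (X \<omega>) A)) \<partial>M)"
proof -
  have "measure lebesgue (cball c \<rho> \<inter> Omega) \<le> measure lebesgue (cball c \<rho>)"
    using Omega(2) by (intro measure_mono_fmeasurable) auto
  also have "\<dots> = measure lborel (cball (0::'a) \<rho>)"
    by (cases "0 \<le> \<rho>") (simp_all add: content_cball)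
  finally have "lam * measure lebesgue (cball c \<rho> \<inter> Omega) \<le> lam * measure lborel (cball (0::'a) \<rho>)"
    using lam by (rule mult_left_mono)
  then have "\<theta> powr (1 - t) * exp (lam * measure lebesgue (cball c \<rho> \<inter> Omega) * (\<theta> - 1))
      \<le> \<theta> powr (1 - t) * exp (lam * measure lborel (cball (0::'a) \<rho>) * (\<theta> - 1))"
    using \<theta> by (intro mult_left_mono) (auto intro: mult_right_mono)
  then show ?thesis
    using A by (intro order_trans[OF poisson_pp_local_tail_le[OF pp Omega A(1) _ A(2) \<theta>]]
        mult_right_mono ennreal_leI) auto
qed

lemma poisson_pp_nn_integral_card:
  fixes n :: nat
  assumes pp: "poisson_pp M X lam Omega" and Q: "disjoint_family Q" "\<And>j. Q j \<in> sets borel"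
    and cover: "Omega \<subseteq> (\<Union>j<n. Q j)"
  shows "(\<integral>\<^sup>+\<omega>. ennreal (real (card (X \<omega>))) \<partial>M) = (\<Sum>j<n. \<integral>\<^sup>+\<omega>. ennreal (real (npts (X \<omega>) (Q j))) \<partial>M)"
proof -
  have "AE \<omega> in M. ennreal (real (card (X \<omega>))) = (\<Sum>j<n. ennreal (real (npts (X \<omega>) (Q j))))"
    using poisson_pp_AE_finite[OF pp] AE_space
  proof eventually_elim
    case (elim \<omega>)
    have "card (X \<omega>) = (\<Sum>j<n. npts (X \<omega>) (Q j))"
      using elim(1) Q(1) cover poisson_pp_subset[OF pp elim(2)]
      by (intro card_eq_sum_npts) (auto simp: disjoint_family_on_def)
    then show ?case
      by (simp add: of_nat_sum sum_ennreal[symmetric] del: sum_ennreal)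
  qed
  then have "(\<integral>\<^sup>+\<omega>. ennreal (real (card (X \<omega>))) \<partial>M)
      = (\<integral>\<^sup>+\<omega>. (\<Sum>j<n. ennreal (real (npts (X \<omega>) (Q j)))) \<partial>M)"
    by (rule nn_integral_cong_AE)
  also have "\<dots> = (\<Sum>j<n. \<integral>\<^sup>+\<omega>. ennreal (real (npts (X \<omega>) (Q j))) \<partial>M)"
    using poisson_pp_measurable_npts[OF pp Q(2)] by (intro nn_integral_sum) auto
  finally show ?thesis .
qed

lemma poisson_pp_heavy_points_le:
  fixes X :: "'w \<Rightarrow> 'a::euclidean_space set" and t \<theta> R \<rho> :: real
  assumes pp: "poisson_pp M X lam Omega" and Omega: "bounded Omega" "Omega \<in> sets lebesgue"
    and lam: "0 \<le> lam" and "0 \<le> R" "R < \<rho>" and \<theta>: "1 \<le> \<theta>"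
  shows "(\<integral>\<^sup>+\<omega>. ennreal (real (card {x \<in> X \<omega>. t \<le> real (npts (X \<omega>) (cball x R))})) \<partial>M)
    \<le> ennreal (\<theta> powr (1 - t) * exp (lam * measure lborel (cball (0::'a) \<rho>) * (\<theta> - 1)))
       * (\<integral>\<^sup>+\<omega>. ennreal (real (card (X \<omega>))) \<partial>M)"
proof -
  let ?C = "\<theta> powr (1 - t) * exp (lam * measure lborel (cball (0::'a) \<rho>) * (\<theta> - 1))"
  have "0 < \<rho> - R"
    using \<open>R < \<rho>\<close> by simp
  then obtain n :: nat and c Q where Q: "disjoint_family Q" "\<And>j. Q j \<in> sets borel"
      "\<And>j. Q j \<subseteq> ball (c j) (\<rho> - R)" and cover: "Omega \<subseteq> (\<Union>j<n. Q j)"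
    by (rule bounded_imp_small_cells[OF Omega(1)]) blast
  have local: "cball x R \<subseteq> cball (c j) \<rho>" if "x \<in> Q j" for j x
    using that Q(3)[of j] by (auto simp: cball_subset_cball_iff dist_commute)
  let ?f = "\<lambda>j \<omega>. ennreal (if t \<le> real (npts (X \<omega>) (cball (c j) \<rho>)) then real (npts (X \<omega>) (Q j)) else 0)"
  have "AE \<omega> in M. ennreal (real (card {x \<in> X \<omega>. t \<le> real (npts (X \<omega>) (cball x R))}))
      \<le> (\<Sum>j<n. ?f j \<omega>)"
    using poisson_pp_AE_finite[OF pp] AE_space
  proof eventually_elim
    case (elim \<omega>)
    have "X \<omega> \<subseteq> (\<Union>j<n. Q j)"
      using cover poisson_pp_subset[OF pp elim(2)] by blast
    then have "card {x \<in> X \<omega>. t \<le> real (npts (X \<omega>) (cball x R))}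
        \<le> (\<Sum>j<n. if t \<le> real (npts (X \<omega>) (cball (c j) \<rho>)) then npts (X \<omega>) (Q j) else 0)"
      using elim(1) local by (intro card_heavy_le_sum_npts) auto
    then have "ennreal (real (card {x \<in> X \<omega>. t \<le> real (npts (X \<omega>) (cball x R))}))
        \<le> ennreal (real (\<Sum>j<n. if t \<le> real (npts (X \<omega>) (cball (c j) \<rho>)) then npts (X \<omega>) (Q j) else 0))"
      by (intro ennreal_leI of_nat_mono)
    also have "\<dots> = (\<Sum>j<n. ?f j \<omega>)"
      by (simp add: of_nat_sum sum_ennreal[symmetric] del: sum_ennreal) (rule sum.cong, auto)
    finally show ?case .
  qed
  then have "(\<integral>\<^sup>+\<omega>. ennreal (real (card {x \<in> X \<omega>. t \<le> real (npts (X \<omega>) (cball x R))})) \<partial>M)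
      \<le> (\<integral>\<^sup>+\<omega>. (\<Sum>j<n. ?f j \<omega>) \<partial>M)"
    by (rule nn_integral_mono_AE)
  also have "\<dots> = (\<Sum>j<n. \<integral>\<^sup>+\<omega>. ?f j \<omega> \<partial>M)"
    using poisson_pp_measurable_npts[OF pp Q(2)] poisson_pp_measurable_npts[OF pp, of "cball _ \<rho>"]
    by (intro nn_integral_sum) auto
  also have "\<dots> \<le> (\<Sum>j<n. ennreal ?C * (\<integral>\<^sup>+\<omega>. ennreal (real (npts (X \<omega>) (Q j))) \<partial>M))"
    using Q(2) local \<open>0 \<le> R\<close>
    by (intro sum_mono poisson_pp_ball_tail_le[OF pp Omega lam _ _ \<theta>]) force+
  also have "\<dots> = ennreal ?C * (\<integral>\<^sup>+\<omega>. ennreal (real (card (X \<omega>))) \<partial>M)"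
    by (simp add: poisson_pp_nn_integral_card[OF pp Q(1,2) cover] sum_distrib_left)
  finally show ?thesis .
qed

section \<open>Numerical estimates\<close>

lemma chernoff_exponent_le:
  fixes D d :: real
  assumes d: "1 \<le> d" and D: "8 * d \<le> D"
  shows "(1 + 1 / (2 * D)) powr (1 - (D ^ 3 + D ^ 2)) * exp ((D ^ 3 + D) * (1 / (2 * D))) \<le> 1 / (2 * d)"
proof -
  define h where "h = 1 / (2 * D)"
  have D8: "8 \<le> D" using d D by simp
  have h: "0 \<le> h" "h \<le> 1 / 16" using D8 by (auto simp: h_def field_simps)
  have "0 \<le> D ^ 3 + D ^ 2 - 1"
    using D8 by (simp add: add_increasing2 one_le_power)
  then have "(D ^ 3 + D ^ 2 - 1) * (h - h ^ 2) \<le> (D ^ 3 + D ^ 2 - 1) * ln (1 + h)"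
    using h by (intro mult_left_mono ln_one_plus_pos_lower_bound) auto
  moreover have "(D ^ 3 + D ^ 2 - 1) * (h - h ^ 2) = D ^ 2 / 2 + D / 4 - 1 / 4 - h + h ^ 2"
    and "(D ^ 3 + D) * h = D ^ 2 / 2 + 1 / 2"
    using D8 by (simp_all add: h_def field_simps power2_eq_square power3_eq_cube)
  moreover have "(1 - (D ^ 3 + D ^ 2)) * ln (1 + h) = - ((D ^ 3 + D ^ 2 - 1) * ln (1 + h))"
    by (simp add: algebra_simps)
  moreover have "ln (2 * d) \<le> 2 * d - 1"
    using d by (intro ln_le_minus_one) simp
  moreover have "0 \<le> h ^ 2"
    by simp
  \<comment> \<open>By \<open>ln (1 + h) \<ge> h - h\<^sup>2\<close> the exponent is at most \<open>3/4 + h - D/4\<close>, while \<open>ln (2 d) \<le> 2 d - 1 \<le> D/4 - 1\<close>.\<close>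
  ultimately have exponent: "(1 - (D ^ 3 + D ^ 2)) * ln (1 + h) + (D ^ 3 + D) * h \<le> - ln (2 * d)"
    using D h by linarith
  have "(1 + h) powr (1 - (D ^ 3 + D ^ 2)) * exp ((D ^ 3 + D) * h)
      = exp ((1 - (D ^ 3 + D ^ 2)) * ln (1 + h) + (D ^ 3 + D) * h)"
    using h by (simp add: powr_def exp_add)
  also have "\<dots> \<le> exp (- ln (2 * d))"
    using exponent by simp
  also have "\<dots> = 1 / (2 * d)"
    using d by (simp add: exp_minus inverse_eq_divide)
  finally show ?thesis
    by (simp add: h_def)
qed

lemma ln_1000_le: "ln (1000::real) \<le> 15 / 2"
proof -
  have "(1000::real) \<le> (1 + (15 / 2) / real (100::nat)) ^ 100"
    by (simp add: power_divide)
  also have "\<dots> \<le> exp (15 / 2)"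
    by (rule exp_ge_one_plus_x_over_n_power_n) auto
  finally show ?thesis
    using ln_le_cancel_iff[of 1000 "exp (15 / 2)"] by simp
qed

lemma sqrt_div_ln_ge:
  fixes x :: real
  assumes x: "1000 \<le> x"
  shows "21 / 20 \<le> sqrt x / (4 * ln x)"
proof -
  define s s0 where "s = sqrt x" and "s0 = sqrt (1000::real)"
  have s0: "158 / 5 \<le> s0"
    unfolding s0_def by (rule real_le_rsqrt) (simp add: power2_eq_square)
  have "s0 \<le> s"
    unfolding s_def s0_def using x by simp
  \<comment> \<open>\<open>ln\<close> is concave: compare with its tangent line at \<open>s0\<close>.\<close>
  have "ln (s / s0) \<le> s / s0 - 1"
    using s0 \<open>s0 \<le> s\<close> by (intro ln_le_minus_one) simp
  then have "ln s \<le> ln s0 + s / s0 - 1"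
    using s0 \<open>s0 \<le> s\<close> by (simp add: ln_div)
  moreover have "ln x = 2 * ln s" "ln s0 = ln 1000 / 2"
    unfolding s_def s0_def using x by (simp_all add: ln_sqrt)
  moreover have "s / s0 \<le> s / (158 / 5)"
    using s0 \<open>s0 \<le> s\<close> by (intro divide_left_mono) auto
  ultimately have "84 / 20 * ln x \<le> s"
    using ln_1000_le s0 \<open>s0 \<le> s\<close> by simp
  moreover have "0 < ln x"
    using x by simp
  ultimately show ?thesis
    by (simp add: s_def field_simps)
qed

lemma cube_le_power_21_20:
  fixes n :: nat
  assumes "1000 \<le> n"
  shows "512 * real n ^ 3 \<le> (21 / 20) ^ n"
  using assms
proof (induction n rule: dec_induct)
  case base
  have "(2::real) \<le> (21 / 20) ^ 20"
    by (simp add: power_divide)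
  then have "(2::real) ^ 50 \<le> ((21 / 20) ^ 20) ^ 50"
    by (rule power_mono) simp
  then show ?case
    by (simp flip: power_mult)
next
  case (step n)
  have n: "1000 \<le> real n"
    using step by simp
  have "512 * real (Suc n) ^ 3 = 512 * (real n ^ 3 + 3 * real n ^ 2 + 3 * real n + 1)"
    by (simp add: power3_eq_cube power2_eq_square algebra_simps)
  also have "\<dots> \<le> 512 * (21 / 20 * real n ^ 3)"
  proof -
    have "4 * real n \<le> real n * real n"
      using n mult_right_mono[of 4 "real n" "real n"] by simp
    then have "3 * real n + 1 \<le> real n ^ 2"
      using n unfolding power2_eq_square by linarith
    moreover have "4 * real n ^ 2 \<le> 1 / 20 * real n ^ 3"
      using n mult_right_mono[of 80 "real n" "real n ^ 2"] by (simp add: power3_eq_cube power2_eq_square)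
    ultimately show ?thesis
      by simp
  qed
  also have "\<dots> \<le> 21 / 20 * (21 / 20) ^ n"
    using step by simp
  finally show ?case
    by simp
qed

lemma cube_le_sqrt_div_ln_power:
  fixes n :: nat
  assumes "1000 \<le> n"
  shows "(8 * real n) ^ 3 \<le> (sqrt (real n) / (4 * ln (real n))) ^ n"
proof -
  have "(8 * real n) ^ 3 = 512 * real n ^ 3"
    by (simp add: power_mult_distrib)
  also have "\<dots> \<le> (21 / 20) ^ n"
    using assms by (rule cube_le_power_21_20)
  also have "\<dots> \<le> (sqrt (real n) / (4 * ln (real n))) ^ n"
    using assms sqrt_div_ln_ge[of "real n"] by (intro power_mono) auto
  finally show ?thesis .
qed

lemma cube_root_threshold:
  fixes Delta :: real and d :: nat
  assumes d: "1000 \<le> d" and Delta: "Delta = (sqrt (real d) / (4 * ln (real d))) ^ d"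
  obtains D where "0 < D" "8 * real d \<le> D" "D ^ 3 = Delta"
    "Delta * (1 + Delta powr (-1/3)) = D ^ 3 + D ^ 2"
proof -
  define D where "D = Delta powr (1 / 3)"
  have cube: "(8 * real d) ^ 3 \<le> Delta"
    using d Delta cube_le_sqrt_div_ln_power[of d] by simp
  moreover have "0 < (8 * real d) ^ 3"
    using d by simp
  ultimately have "0 < Delta"
    by linarith
  then have "0 < D"
    by (simp add: D_def)
  have D3: "D ^ 3 = Delta"
    using \<open>0 < Delta\<close> by (simp add: D_def powr_powr flip: powr_realpow)
  have "Delta powr (-1/3) = 1 / D"
    using \<open>0 < Delta\<close> by (simp add: D_def powr_minus_divide)
  then have threshold: "Delta * (1 + Delta powr (-1/3)) = D ^ 3 + D ^ 2"
    using \<open>0 < D\<close> D3[symmetric] by (simp add: field_simps power2_eq_square power3_eq_cube)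
  have "8 * real d = ((8 * real d) powr 3) powr (1 / 3)"
    using d by (simp only: powr_powr) simp
  also have "\<dots> = ((8 * real d) ^ 3) powr (1 / 3)"
    using d by (simp add: powr_numeral)
  also have "\<dots> \<le> D"
    unfolding D_def using cube by (intro powr_mono2) auto
  finally show ?thesis
    using that \<open>0 < D\<close> D3 threshold by blast
qed

theorem lemma2p2:
  fixes M :: "'w measure" and X :: "'w \<Rightarrow> 'a::euclidean_space set"
    and Omega :: "'a set" and lam Delta :: real
  assumes "DIM('a) \<ge> 1000"
    and "bounded Omega" and "Omega \<in> sets lebesgue"
    and "lam = (sqrt (real DIM('a)) / (8 * ln (real DIM('a)))) ^ DIM('a)"
    and "Delta = 2 ^ DIM('a) * lam"
    and "poisson_pp M X lam Omega"
  shows "(\<integral>\<^sup>+ \<omega>. ennreal (real (card {x \<in> X \<omega>.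
              real (npts (X \<omega>) (cball x (2 * unit_vol_radius TYPE('a))))
                \<ge> Delta * (1 + Delta powr (-1/3))})) \<partial>M)
         \<le> ennreal (1 / (2 * real DIM('a))) * (\<integral>\<^sup>+ \<omega>. ennreal (real (card (X \<omega>))) \<partial>M)"
proof -
  define d r where "d = DIM('a)" and "r = unit_vol_radius TYPE('a)"
  have "1000 \<le> d"
    using assms(1) by (simp add: d_def)
  moreover have "Delta = (sqrt (real d) / (4 * ln (real d))) ^ d"
    unfolding assms(4,5) d_def by (simp flip: power_mult_distrib)
  ultimately obtain D where D: "0 < D" "8 * real d \<le> D" "D ^ 3 = Delta"
    and threshold: "Delta * (1 + Delta powr (-1/3)) = D ^ 3 + D ^ 2"
    by (rule cube_root_threshold)
  define \<theta> \<rho> where "\<theta> = 1 + 1 / (2 * D)" and "\<rho> = 2 * root d (1 + 1 / D ^ 2) * r"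
  have "lam * measure lborel (cball (0::'a) \<rho>) = lam * (2 * root d (1 + 1 / D ^ 2)) ^ d"
    unfolding \<rho>_def r_def d_def by (subst measure_cball_unit_vol_radius) simp_all
  also have "\<dots> = D ^ 3 * (1 + 1 / D ^ 2)"
    using \<open>1000 \<le> d\<close> D(3) by (simp add: assms(5) d_def power_mult_distrib)
  also have "\<dots> = D ^ 3 + D"
    using D(1) by (simp add: field_simps power2_eq_square power3_eq_cube)
  finally have volume: "lam * measure lborel (cball (0::'a) \<rho>) = D ^ 3 + D" .
  have "2 * r < \<rho>"
    using D(1) \<open>1000 \<le> d\<close> unit_vol_radius_pos[where 'a='a] by (simp add: \<rho>_def r_def)
  have "(\<integral>\<^sup>+\<omega>. ennreal (real (card {x \<in> X \<omega>. D ^ 3 + D ^ 2 \<le> real (npts (X \<omega>) (cball x (2 * r)))})) \<partial>M)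
      \<le> ennreal (\<theta> powr (1 - (D ^ 3 + D ^ 2)) * exp ((D ^ 3 + D) * (\<theta> - 1)))
         * (\<integral>\<^sup>+\<omega>. ennreal (real (card (X \<omega>))) \<partial>M)"
    using poisson_pp_heavy_points_le[OF assms(6,2,3) _ _ \<open>2 * r < \<rho>\<close>, of \<theta>] volume assms(4)
      D(1) unit_vol_radius_pos[where 'a='a] by (simp add: \<theta>_def r_def)
  also have "\<dots> \<le> ennreal (1 / (2 * real d)) * (\<integral>\<^sup>+\<omega>. ennreal (real (card (X \<omega>))) \<partial>M)"
    using chernoff_exponent_le[OF _ D(2)] \<open>1000 \<le> d\<close>
    by (intro mult_right_mono ennreal_leI) (simp_all add: \<theta>_def)
  finally show ?thesis
    unfolding threshold r_def d_def .
qed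

end
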